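(* Let $\Omega\subset\mathbb{R}^2$ be a domain and $u\in C^{2}(\Omega)$. Let $S(u)=\{(x,y)\in\Omega:u_x-y=0,\ u_y+x=0\}$, on $\Omega\setminus S(u)$ let $D=\sqrt{(u_x-y)^2+(u_y+x)^2}$, $N(u)=(u_x-y,u_y+x)/D$, $N^\perp(u)=(u_y+x,-(u_x-y))/D$, and $H=\operatorname{div}N(u)$. Let $p_0\in S(u)$ be an isolated point of $S(u)$ and suppose $|H(p)|=o(1/r(p))$ as $p\to p_0$, where $r(p)=|p-p_0|$. Consider the $C^1$ vector field $N^\perp D=(u_y+x,\,-u_x+y)$ on $\Omega$ as a map $\Omega\to\mathbb{R}^2$. Then the differential $d(N^\perp D)_{p_0}$ is the identity linear transformation, the index of $N^\perp D$ at its isolated zero $p_0$ is $+1$, and $u_{xx}=u_{xy}=u_{yy}=0$ at $p_0$. *)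

theory Defs
  imports "HOL-Complex_Analysis.Complex_Analysis" "HOL-Library.Landau_Symbols"
begin

text \<open>The plane R^2 is modelled by the complex numbers: a point (x,y) is
  the complex number x + i y, so x = Re z and y = Im z.\<close>

definition px :: "(complex \<Rightarrow> real) \<Rightarrow> complex \<Rightarrow> real" where
  "px f z = frechet_derivative f (at z) 1"

definition py :: "(complex \<Rightarrow> real) \<Rightarrow> complex \<Rightarrow> real" where
  "py f z = frechet_derivative f (at z) \<i>"

definition C2_on :: "complex set \<Rightarrow> (complex \<Rightarrow> real) \<Rightarrow> bool" where
  "C2_on \<Omega> u \<longleftrightarrow>
     (\<forall>z\<in>\<Omega>. u differentiable (at z)) \<and>
     (\<forall>z\<in>\<Omega>. px u differentiable (at z)) \<and>
     (\<forall>z\<in>\<Omega>. py u differentiable (at z)) \<and>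
     continuous_on \<Omega> (px (px u)) \<and> continuous_on \<Omega> (py (px u)) \<and>
     continuous_on \<Omega> (px (py u)) \<and> continuous_on \<Omega> (py (py u))"

definition Sset :: "complex set \<Rightarrow> (complex \<Rightarrow> real) \<Rightarrow> complex set" where
  "Sset \<Omega> u = {z \<in> \<Omega>. px u z - Im z = 0 \<and> py u z + Re z = 0}"

definition Dfun :: "(complex \<Rightarrow> real) \<Rightarrow> complex \<Rightarrow> real" where
  "Dfun u z = sqrt ((px u z - Im z)^2 + (py u z + Re z)^2)"

text \<open>H = div N(u), N(u) = (u_x - y, u_y + x)/D  (meaningful off S(u)).\<close>
definition Hfun :: "(complex \<Rightarrow> real) \<Rightarrow> complex \<Rightarrow> real" where
  "Hfun u z = px (\<lambda>w. (px u w - Im w) / Dfun u w) z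
            + py (\<lambda>w. (py u w + Re w) / Dfun u w) z"

definition NperpD :: "(complex \<Rightarrow> real) \<Rightarrow> complex \<Rightarrow> complex" where
  "NperpD u z = Complex (py u z + Re z) (- px u z + Im z)"

definition vf_index_eq :: "(complex \<Rightarrow> complex) \<Rightarrow> complex \<Rightarrow> int \<Rightarrow> bool" where
  "vf_index_eq V p k \<longleftrightarrow>
     (\<exists>\<epsilon>>0. \<forall>r. 0 < r \<and> r < \<epsilon> \<longrightarrow> winding_number (V \<circ> circlepath p r) 0 = of_int k)"

end

theory Submission
  imports Defs
begin

text \<open>
  Write \<open>V = N\<^sup>\<bottom>D\<close>. In complex notation \<open>V z = z - \<i> \<nabla>u(z)\<close>, so its differential at \<open>p\<^sub>0\<close> is
  \<open>id - \<i> Hess u(p\<^sub>0)\<close>, and the theorem amounts to \<open>Hess u(p\<^sub>0) = 0\<close>. A direct computation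
  gives \<open>H D = Hess u(M, M)\<close> for the unit field \<open>M = V / |V|\<close>. Since \<open>V(p\<^sub>0) = 0\<close>, \<open>D = |V| = O(r)\<close>;
  with \<open>H = o(1/r)\<close> and continuity of the second derivatives this gives
  \<open>Hess u(p\<^sub>0)(M, M) \<longrightarrow> 0\<close> at \<open>p\<^sub>0\<close>.

  The differential of \<open>V\<close> at \<open>p\<^sub>0\<close> is not zero (the Hessian is symmetric), so along some ray
  \<open>M\<close> tends to a unit vector \<open>m\<close> and along the opposite ray to \<open>-m\<close>. Punctured discs are
  connected, hence every level \<open>\<langle>M, m\<rangle> = c\<close> with \<open>|c| < 1\<close> is attained arbitrarily close to
  \<open>p\<^sub>0\<close>. Evaluating the quadratic form on these levels shows that it vanishes identically;
  with the symmetry of second derivatives the Hessian vanishes. The differential of \<open>V\<close> is then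
  the identity, and small circles around \<open>p\<^sub>0\<close> are mapped by \<open>V\<close> to loops homotopic to circles
  around \<open>0\<close> in \<open>\<complex> - {0}\<close>, so the index is \<open>+1\<close>.
\<close>

section \<open>Symmetry of mixed second derivatives\<close>

lemma has_real_derivative_along_line:
  fixes f :: "'a::real_normed_vector \<Rightarrow> real"
  assumes "f differentiable (at (a + t *\<^sub>R w))"
  shows "((\<lambda>s. f (a + s *\<^sub>R w)) has_real_derivative
           frechet_derivative f (at (a + t *\<^sub>R w)) w) (at t)"
proof -
  have line: "((\<lambda>s. a + s *\<^sub>R w) has_derivative (\<lambda>s. s *\<^sub>R w)) (at t)"
    by (auto intro!: derivative_eq_intros)
  have f': "(f has_derivative frechet_derivative f (at (a + t *\<^sub>R w))) (at (a + t *\<^sub>R w))"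
    using assms frechet_derivative_works by blast
  have "linear (frechet_derivative f (at (a + t *\<^sub>R w)))"
    using f' has_derivative_linear by blast
  then have "(\<lambda>s. frechet_derivative f (at (a + t *\<^sub>R w)) (s *\<^sub>R w))
      = (\<lambda>s. frechet_derivative f (at (a + t *\<^sub>R w)) w * s)"
    by (simp add: linear_scale mult.commute)
  moreover have "((\<lambda>s. f (a + s *\<^sub>R w)) has_derivative
      (\<lambda>s. frechet_derivative f (at (a + t *\<^sub>R w)) (s *\<^sub>R w))) (at t)"
    using has_derivative_compose[OF line f'] by (simp only: comp_def)
  ultimately show ?thesis
    by (metis has_field_derivative_def)
qed

definition second_difference ::
    "('a::real_normed_vector \<Rightarrow> real) \<Rightarrow> 'a \<Rightarrow> 'a \<Rightarrow> 'a \<Rightarrow> real \<Rightarrow> real" where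
  "second_difference f p v w h = f (p + h *\<^sub>R v + h *\<^sub>R w) - f (p + h *\<^sub>R v) - f (p + h *\<^sub>R w) + f p"

lemma second_difference_commute: "second_difference f p v w h = second_difference f p w v h"
  by (simp add: second_difference_def algebra_simps)

lemma second_difference_mean_value:
  fixes f :: "'a::real_normed_vector \<Rightarrow> real"
  assumes "0 < h"
    and "\<And>t. 0 \<le> t \<Longrightarrow> t \<le> h \<Longrightarrow>
           f differentiable (at (p + h *\<^sub>R v + t *\<^sub>R w)) \<and> f differentiable (at (p + t *\<^sub>R w))"
  obtains \<xi> where "0 < \<xi>" "\<xi> < h"
    "second_difference f p v w h =
       h * (frechet_derivative f (at (p + h *\<^sub>R v + \<xi> *\<^sub>R w)) w
            - frechet_derivative f (at (p + \<xi> *\<^sub>R w)) w)"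
proof -
  define \<phi> where "\<phi> t = f (p + h *\<^sub>R v + t *\<^sub>R w) - f (p + t *\<^sub>R w)" for t
  have \<phi>': "(\<phi> has_real_derivative
          frechet_derivative f (at (p + h *\<^sub>R v + t *\<^sub>R w)) w
          - frechet_derivative f (at (p + t *\<^sub>R w)) w) (at t)"
    if "0 \<le> t" "t \<le> h" for t
  proof -
    have "((\<lambda>s. f (p + h *\<^sub>R v + s *\<^sub>R w)) has_real_derivative
        frechet_derivative f (at (p + h *\<^sub>R v + t *\<^sub>R w)) w) (at t)"
      using has_real_derivative_along_line[of f "p + h *\<^sub>R v" t w] assms(2)[OF that] by blast
    moreover have "((\<lambda>s. f (p + s *\<^sub>R w)) has_real_derivative
        frechet_derivative f (at (p + t *\<^sub>R w)) w) (at t)"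
      using has_real_derivative_along_line[of f p t w] assms(2)[OF that] by blast
    ultimately show ?thesis
      unfolding \<phi>_def[abs_def] by (rule DERIV_diff)
  qed
  obtain \<xi> where "0 < \<xi>" "\<xi> < h"
      "\<phi> h - \<phi> 0 = (h - 0) * (frechet_derivative f (at (p + h *\<^sub>R v + \<xi> *\<^sub>R w)) w
                              - frechet_derivative f (at (p + \<xi> *\<^sub>R w)) w)"
    using MVT2[OF \<open>0 < h\<close> \<phi>'] by blast
  moreover have "\<phi> h - \<phi> 0 = second_difference f p v w h"
    by (simp add: \<phi>_def second_difference_def)
  ultimately show thesis
    using that[of \<xi>] by simp
qed

lemma second_difference_estimate:
  fixes f :: "'a::real_normed_vector \<Rightarrow> real"
  assumes "0 < h" "h * (norm v + norm w) < d" "0 \<le> \<epsilon>"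
    and diff: "\<And>z. z \<in> ball p d \<Longrightarrow> f differentiable (at z)"
    and "linear D"
    and approx: "\<And>y. norm (y - p) < d \<Longrightarrow>
      \<bar>frechet_derivative f (at y) w - frechet_derivative f (at p) w - D (y - p)\<bar> \<le> \<epsilon> * norm (y - p)"
  shows "\<bar>second_difference f p v w h - h\<^sup>2 * D v\<bar> \<le> \<epsilon> * h\<^sup>2 * (norm v + 2 * norm w)"
proof -
  define g where "g z = frechet_derivative f (at z) w" for z
  have tw: "t * norm w \<le> h * norm w" if "t \<le> h" for t
    using that by (simp add: mult_right_mono)
  have "0 \<le> h * norm v"
    using assms(1) by simp
  have distrib: "h * (norm v + norm w) = h * norm v + h * norm w"
    "h * (norm v + 2 * norm w) = h * norm v + 2 * (h * norm w)"
    by (simp_all add: algebra_simps)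
  have "f differentiable (at (p + h *\<^sub>R v + t *\<^sub>R w)) \<and> f differentiable (at (p + t *\<^sub>R w))"
    if "0 \<le> t" "t \<le> h" for t
  proof -
    have "norm (h *\<^sub>R v) = h * norm v" "norm (t *\<^sub>R w) = t * norm w"
      using assms(1) that(1) by simp_all
    moreover note norm_triangle_ineq[of "h *\<^sub>R v" "t *\<^sub>R w"] tw[OF that(2)]
      assms(2)[unfolded distrib(1)] \<open>0 \<le> h * norm v\<close>
    ultimately have "norm (h *\<^sub>R v + t *\<^sub>R w) < d" "norm (t *\<^sub>R w) < d"
      by linarith+
    moreover have "p + x \<in> ball p d" if "norm x < d" for x
      using that by (simp add: dist_norm)
    ultimately show ?thesis
      using diff by (metis add.assoc)
  qed
  then obtain \<xi> where "0 < \<xi>" "\<xi> < h"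
    and \<Delta>: "second_difference f p v w h = h * (g (p + h *\<^sub>R v + \<xi> *\<^sub>R w) - g (p + \<xi> *\<^sub>R w))"
    using second_difference_mean_value[OF \<open>0 < h\<close>] unfolding g_def by blast
  define y1 where "y1 = p + h *\<^sub>R v + \<xi> *\<^sub>R w"
  define y2 where "y2 = p + \<xi> *\<^sub>R w"
  have "norm (y1 - p) \<le> h * norm v + \<xi> * norm w" "norm (y2 - p) = \<xi> * norm w"
    using norm_triangle_ineq[of "h *\<^sub>R v" "\<xi> *\<^sub>R w"] \<open>0 < h\<close> \<open>0 < \<xi>\<close> by (simp_all add: y1_def y2_def)
  moreover note tw[OF less_imp_le[OF \<open>\<xi> < h\<close>]] assms(2)[unfolded distrib(1)] \<open>0 \<le> h * norm v\<close>
  ultimately have "norm (y1 - p) < d" "norm (y2 - p) < d"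
    "norm (y1 - p) + norm (y2 - p) \<le> h * norm v + 2 * (h * norm w)"
    by linarith+
  have "second_difference f p v w h - h\<^sup>2 * D v = h * (g y1 - g y2 - h * D v)"
    unfolding \<Delta> y1_def y2_def by (simp add: power2_eq_square algebra_simps)
  then have "\<bar>second_difference f p v w h - h\<^sup>2 * D v\<bar> = h * \<bar>g y1 - g y2 - h * D v\<bar>"
    using \<open>0 < h\<close> by (simp add: abs_mult)
  also have "g y1 - g y2 - h * D v = (g y1 - g p - D (y1 - p)) - (g y2 - g p - D (y2 - p))"
    using \<open>linear D\<close> by (simp add: y1_def y2_def linear_add linear_scale)
  also have "h * \<bar>\<dots>\<bar> \<le> h * (\<epsilon> * (norm (y1 - p) + norm (y2 - p)))"
    using approx[OF \<open>norm (y1 - p) < d\<close>] approx[OF \<open>norm (y2 - p) < d\<close>] \<open>0 < h\<close>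
    unfolding g_def by (intro mult_left_mono) (simp_all add: algebra_simps)
  also have "\<dots> \<le> h * (\<epsilon> * (h * (norm v + 2 * norm w)))"
    using \<open>norm (y1 - p) + norm (y2 - p) \<le> h * norm v + 2 * (h * norm w)\<close> \<open>0 \<le> \<epsilon>\<close> \<open>0 < h\<close>
    unfolding distrib(2) by (intro mult_left_mono) simp_all
  also have "\<dots> = \<epsilon> * h\<^sup>2 * (norm v + 2 * norm w)"
    by (simp add: power2_eq_square)
  finally show ?thesis .
qed

lemma second_difference_tendsto:
  fixes f :: "'a::real_normed_vector \<Rightarrow> real"
  assumes "open S" "p \<in> S" "\<And>z. z \<in> S \<Longrightarrow> f differentiable (at z)"
    and "((\<lambda>z. frechet_derivative f (at z) w) has_derivative D) (at p)"
  shows "((\<lambda>h. second_difference f p v w h / h\<^sup>2) \<longlongrightarrow> D v) (at_right 0)"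
proof (rule tendstoI)
  fix e :: real
  assume "e > 0"
  define C where "C = norm v + 2 * norm w + 1"
  have "C > 0"
    unfolding C_def by (simp add: add_nonneg_pos)
  then have "e / (2 * C) > 0"
    using \<open>e > 0\<close> by simp
  then obtain d1 where "d1 > 0" and d1: "\<And>y. norm (y - p) < d1 \<Longrightarrow>
      \<bar>frechet_derivative f (at y) w - frechet_derivative f (at p) w - D (y - p)\<bar> \<le> e / (2 * C) * norm (y - p)"
    using assms(4) unfolding has_derivative_at_alt by (metis real_norm_def)
  obtain d0 where "d0 > 0" "ball p d0 \<subseteq> S"
    using assms(1,2) openE by blast
  have "min d0 d1 / C > 0"
    using \<open>d0 > 0\<close> \<open>d1 > 0\<close> \<open>C > 0\<close> by simp
  then have "eventually (\<lambda>h. 0 < h \<and> h < min d0 d1 / C) (at_right 0)"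
    using eventually_at_right_field by blast
  then show "eventually (\<lambda>h. dist (second_difference f p v w h / h\<^sup>2) (D v) < e) (at_right 0)"
  proof eventually_elim
    case (elim h)
    then have small: "h * (norm v + norm w) < min d0 d1"
      using \<open>C > 0\<close> by (simp add: C_def pos_less_divide_eq) (smt (verit) mult_left_mono norm_ge_zero)
    have "\<bar>second_difference f p v w h - h\<^sup>2 * D v\<bar> \<le> e / (2 * C) * h\<^sup>2 * (norm v + 2 * norm w)"
    proof (rule second_difference_estimate)
      show "f differentiable (at z)" if "z \<in> ball p (min d0 d1)" for z
        using that \<open>ball p d0 \<subseteq> S\<close> assms(3) by auto
      show "\<bar>frechet_derivative f (at y) w - frechet_derivative f (at p) w - D (y - p)\<bar>
          \<le> e / (2 * C) * norm (y - p)" if "norm (y - p) < min d0 d1" for y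
        using that d1 by simp
    qed (use elim small \<open>e / (2 * C) > 0\<close> has_derivative_linear[OF assms(4)] in auto)
    also have "\<dots> \<le> e / 2 * h\<^sup>2"
      using \<open>e > 0\<close> \<open>C > 0\<close> by (simp add: C_def field_simps)
    also have "\<dots> < e * h\<^sup>2"
      using elim \<open>e > 0\<close> by simp
    finally show ?case
      using elim by (simp add: dist_real_def field_simps)
  qed
qed

lemma frechet_derivative_partials_commute:
  fixes f :: "'a::real_normed_vector \<Rightarrow> real"
  assumes "open S" "p \<in> S" "\<And>z. z \<in> S \<Longrightarrow> f differentiable (at z)"
    and "(\<lambda>z. frechet_derivative f (at z) v) differentiable (at p)"
    and "(\<lambda>z. frechet_derivative f (at z) w) differentiable (at p)"
  shows "frechet_derivative (\<lambda>z. frechet_derivative f (at z) w) (at p) v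
       = frechet_derivative (\<lambda>z. frechet_derivative f (at z) v) (at p) w"
proof -
  have "((\<lambda>h. second_difference f p v w h / h\<^sup>2)
      \<longlongrightarrow> frechet_derivative (\<lambda>z. frechet_derivative f (at z) w) (at p) v) (at_right 0)"
    using second_difference_tendsto[OF assms(1-3) assms(5)[unfolded frechet_derivative_works]] .
  moreover have "((\<lambda>h. second_difference f p v w h / h\<^sup>2)
      \<longlongrightarrow> frechet_derivative (\<lambda>z. frechet_derivative f (at z) v) (at p) w) (at_right 0)"
    unfolding second_difference_commute[of f p v w]
    using second_difference_tendsto[OF assms(1-3) assms(4)[unfolded frechet_derivative_works]] .
  ultimately show ?thesis
    using tendsto_unique[OF trivial_limit_at_right_real] by blast
qed


section \<open>Vector fields near an isolated zero\<close>

lemma tendsto_along_ray: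
  fixes f :: "'a::real_normed_vector \<Rightarrow> 'b::topological_space"
  assumes "(f \<longlongrightarrow> l) (at p)" "v \<noteq> 0"
  shows "((\<lambda>t. f (p + t *\<^sub>R v)) \<longlongrightarrow> l) (at_right 0)"
proof -
  have "filterlim (\<lambda>t. p + t *\<^sub>R v) (at p) (at_right 0)"
  proof (rule filterlim_atI)
    show "((\<lambda>t. p + t *\<^sub>R v) \<longlongrightarrow> p) (at_right 0)"
      by (auto intro!: tendsto_eq_intros)
    show "eventually (\<lambda>t. p + t *\<^sub>R v \<noteq> p) (at_right 0)"
      using eventually_at_right_less[of 0] by eventually_elim (use assms(2) in auto)
  qed
  from filterlim_compose[OF assms(1) this] show ?thesis .
qed

lemma tendsto_sgn_along_ray:
  fixes V :: "'a::real_normed_vector \<Rightarrow> 'b::real_normed_vector"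
  assumes "(V has_derivative L) (at p)" "V p = 0" "L v \<noteq> 0"
  shows "((\<lambda>t. sgn (V (p + t *\<^sub>R v))) \<longlongrightarrow> sgn (L v)) (at_right 0)"
proof -
  define G where "G t = V (p + t *\<^sub>R v)" for t :: real
  have line: "((\<lambda>t. p + t *\<^sub>R v) has_derivative (\<lambda>t. t *\<^sub>R v)) (at 0)"
    by (auto intro!: derivative_eq_intros)
  have "(V has_derivative L) (at (p + 0 *\<^sub>R v))"
    using assms(1) by simp
  from has_derivative_compose[OF line this]
  have "(G has_derivative (\<lambda>t. t *\<^sub>R L v)) (at 0)"
    using has_derivative_linear[OF assms(1)] by (simp add: G_def[abs_def] comp_def linear_scale)
  then have "(G has_derivative (\<lambda>t. t *\<^sub>R L v)) (at_right 0)"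
    by (rule has_derivative_at_withinI)
  then have "((\<lambda>t. (1 / norm (t - 0)) *\<^sub>R (G t - (G 0 + (t - 0) *\<^sub>R L v))) \<longlongrightarrow> 0)
      (at_right 0)"
    unfolding has_derivative_within by (rule conjunct2)
  moreover have "eventually (\<lambda>t. (1 / norm (t - 0)) *\<^sub>R (G t - (G 0 + (t - 0) *\<^sub>R L v))
      = inverse t *\<^sub>R G t - L v) (at_right 0)"
    using eventually_at_right_less[of 0] by eventually_elim (simp add: G_def assms(2) scaleR_diff_right divide_inverse)
  ultimately have "((\<lambda>t. inverse t *\<^sub>R G t - L v) \<longlongrightarrow> 0) (at_right 0)"
    by (rule Lim_transform_eventually)
  then have "((\<lambda>t. sgn (inverse t *\<^sub>R G t)) \<longlongrightarrow> sgn (L v)) (at_right 0)"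
    using assms(3) by (intro tendsto_sgn) (simp add: LIM_zero_iff)
  moreover have "eventually (\<lambda>t. sgn (inverse t *\<^sub>R G t) = sgn (V (p + t *\<^sub>R v))) (at_right 0)"
    using eventually_at_right_less[of 0] by eventually_elim (simp add: G_def sgn_scaleR)
  ultimately show ?thesis
    by (rule Lim_transform_eventually)
qed

lemma frequently_inner_eq_between_opposite_ray_limits:
  fixes M :: "complex \<Rightarrow> 'b::real_inner"
  assumes "continuous_on (ball p r - {p}) M" "r > 0" "v \<noteq> 0"
    and "((\<lambda>t. M (p + t *\<^sub>R v)) \<longlongrightarrow> m) (at_right 0)"
    and "((\<lambda>t. M (p - t *\<^sub>R v)) \<longlongrightarrow> - m) (at_right 0)"
    and "- (m \<bullet> m) < c" "c < m \<bullet> m"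
  shows "\<exists>\<^sub>F z in at p. M z \<bullet> m = c"
  unfolding frequently_at
proof (intro allI impI)
  fix \<rho> :: real
  assume "\<rho> > 0"
  define C where "C = ball p (min \<rho> r) - {p}"
  have "((\<lambda>t. M (p + t *\<^sub>R v) \<bullet> m) \<longlongrightarrow> m \<bullet> m) (at_right 0)"
    "((\<lambda>t. M (p - t *\<^sub>R v) \<bullet> m) \<longlongrightarrow> - (m \<bullet> m)) (at_right 0)"
    using tendsto_inner[OF assms(4) tendsto_const] tendsto_inner[OF assms(5) tendsto_const] by simp_all
  then have "eventually (\<lambda>t. c < M (p + t *\<^sub>R v) \<bullet> m) (at_right 0)"
    "eventually (\<lambda>t. M (p - t *\<^sub>R v) \<bullet> m < c) (at_right 0)"
    using assms(6,7) by (auto dest: order_tendstoD)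
  moreover have "eventually (\<lambda>t::real. t < min \<rho> r / norm v) (at_right 0)"
    using assms(2,3) \<open>\<rho> > 0\<close> by (intro order_tendstoD(2)[OF tendsto_ident_at]) simp
  ultimately have "eventually (\<lambda>t. c < M (p + t *\<^sub>R v) \<bullet> m \<and> M (p - t *\<^sub>R v) \<bullet> m < c
      \<and> 0 < t \<and> t < min \<rho> r / norm v) (at_right 0)"
    by (intro eventually_conj eventually_at_right_less)
  then obtain t where t: "c < M (p + t *\<^sub>R v) \<bullet> m" "M (p - t *\<^sub>R v) \<bullet> m < c"
      "0 < t" "t < min \<rho> r / norm v"
    using eventually_happens'[OF trivial_limit_at_right_real] by blast
  then have "t * norm v < min \<rho> r"
    using assms(3) by (simp add: pos_less_divide_eq)
  then have "p + t *\<^sub>R v \<in> C" "p - t *\<^sub>R v \<in> C"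
    using t(3) assms(3) by (auto simp: C_def dist_norm)
  moreover have "connected ((\<lambda>z. M z \<bullet> m) ` C)"
    unfolding C_def
    by (intro connected_continuous_image connected_punctured_ball continuous_intros
        continuous_on_subset[OF assms(1)]) auto
  ultimately have "c \<in> (\<lambda>z. M z \<bullet> m) ` C"
    using t(1,2) unfolding connected_iff_interval by (meson imageI less_imp_le)
  then show "\<exists>z\<in>UNIV. z \<noteq> p \<and> dist z p < \<rho> \<and> M z \<bullet> m = c"
    by (auto simp: C_def dist_commute)
qed

lemma tendsto_frequently_eq_imp_eq:
  fixes f :: "'a \<Rightarrow> 'b::t2_space"
  assumes "(f \<longlongrightarrow> l) F" "\<exists>\<^sub>F x in F. f x = k"
  shows "l = k"
proof (rule ccontr)
  assume "l \<noteq> k"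
  then have "eventually (\<lambda>x. f x \<noteq> k) F"
    using tendsto_imp_eventually_ne[OF assms(1)] by blast
  then show False
    using assms(2) by (simp add: frequently_def)
qed

lemma complex_orthonormal_expansion:
  fixes m w :: complex
  assumes "cmod m = 1"
  shows "w = (w \<bullet> m) *\<^sub>R m + (w \<bullet> (\<i> * m)) *\<^sub>R (\<i> * m)"
    and "(w \<bullet> m)\<^sup>2 + (w \<bullet> (\<i> * m))\<^sup>2 = (cmod w)\<^sup>2"
proof -
  have "(Re m)\<^sup>2 + (Im m)\<^sup>2 = 1"
    using assms by (simp add: cmod_def)
  then have m: "x = x * ((Re m)\<^sup>2 + (Im m)\<^sup>2)" for x :: real
    by simp
  show "w = (w \<bullet> m) *\<^sub>R m + (w \<bullet> (\<i> * m)) *\<^sub>R (\<i> * m)"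
    by (subst complex_eq_iff, subst (1 2) m) (simp add: inner_complex_def algebra_simps power2_eq_square)
  show "(w \<bullet> m)\<^sup>2 + (w \<bullet> (\<i> * m))\<^sup>2 = (cmod w)\<^sup>2"
    by (subst cmod_power2, subst (1 2) m) (simp add: inner_complex_def algebra_simps power2_eq_square)
qed

lemma inner_linear_self_expand:
  assumes "linear T"
  shows "(a *\<^sub>R x + b *\<^sub>R y) \<bullet> T (a *\<^sub>R x + b *\<^sub>R y)
    = a\<^sup>2 * (x \<bullet> T x) + a * b * (x \<bullet> T y + y \<bullet> T x) + b\<^sup>2 * (y \<bullet> T y)"
  using assms by (simp add: linear_add linear_scale inner_add_left inner_add_right algebra_simps power2_eq_square)

lemma frequently_unit_field_on_level:
  fixes M :: "complex \<Rightarrow> complex"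
  assumes M: "continuous_on (ball p r - {p}) M" "r > 0" "\<And>z. z \<in> ball p r - {p} \<Longrightarrow> cmod (M z) = 1"
    and rays: "v \<noteq> 0" "cmod m = 1" "((\<lambda>t. M (p + t *\<^sub>R v)) \<longlongrightarrow> m) (at_right 0)"
      "((\<lambda>t. M (p - t *\<^sub>R v)) \<longlongrightarrow> - m) (at_right 0)"
    and "-1 < c" "c < 1"
  shows "\<exists>\<^sub>F z in at p. M z \<bullet> m = c \<and> (M z \<bullet> (\<i> * m))\<^sup>2 = 1 - c\<^sup>2"
proof -
  have "m \<bullet> m = 1"
    using rays(2) by (simp add: power2_norm_eq_inner[symmetric])
  then have "\<exists>\<^sub>F z in at p. M z \<bullet> m = c"
    using assms(8,9) by (intro frequently_inner_eq_between_opposite_ray_limits[OF M(1,2) rays(1,3,4)]) auto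
  moreover have "eventually (\<lambda>z. cmod (M z) = 1) (at p)"
    unfolding eventually_at using M(2,3) by (auto simp: dist_commute)
  ultimately show ?thesis
  proof (rule frequently_eventually_frequently[THEN frequently_elim1])
    fix z
    assume z: "M z \<bullet> m = c \<and> cmod (M z) = 1"
    then have "c\<^sup>2 + (M z \<bullet> (\<i> * m))\<^sup>2 = 1"
      using complex_orthonormal_expansion(2)[OF rays(2), of "M z"] by simp
    with z show "M z \<bullet> m = c \<and> (M z \<bullet> (\<i> * m))\<^sup>2 = 1 - c\<^sup>2"
      by simp
  qed
qed

lemma quadratic_form_eq_0_if_tendsto_0_along_unit_field:
  fixes M T :: "complex \<Rightarrow> complex"
  assumes T: "bounded_linear T"
    and M: "continuous_on (ball p r - {p}) M" "r > 0" "\<And>z. z \<in> ball p r - {p} \<Longrightarrow> cmod (M z) = 1"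
    and lim: "((\<lambda>z. M z \<bullet> T (M z)) \<longlongrightarrow> 0) (at p)"
    and rays: "v \<noteq> 0" "cmod m = 1" "((\<lambda>t. M (p + t *\<^sub>R v)) \<longlongrightarrow> m) (at_right 0)"
      "((\<lambda>t. M (p - t *\<^sub>R v)) \<longlongrightarrow> - m) (at_right 0)"
  shows "w \<bullet> T w = 0"
proof -
  define Q where "Q x = x \<bullet> T x" for x
  define n where "n = \<i> * m"
  define K where "K = m \<bullet> T n + n \<bullet> T m"
  note level = frequently_unit_field_on_level[OF M rays, folded n_def]
  have expand: "Q x = (x \<bullet> m)\<^sup>2 * Q m + (x \<bullet> m) * (x \<bullet> n) * K + (x \<bullet> n)\<^sup>2 * Q n" for x
    using inner_linear_self_expand[OF bounded_linear.linear[OF T], of "x \<bullet> m" m "x \<bullet> n" n]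
      complex_orthonormal_expansion(1)[OF rays(2), of x]
    unfolding Q_def K_def n_def by simp
  have QM: "((\<lambda>z. Q (M z)) \<longlongrightarrow> 0) (at p)"
    using lim by (simp add: Q_def)
  have "((\<lambda>t. Q (M (p + t *\<^sub>R v))) \<longlongrightarrow> Q m) (at_right 0)"
    unfolding Q_def by (intro tendsto_inner bounded_linear.tendsto[OF T] rays(3))
  then have "Q m = 0"
    using tendsto_along_ray[OF QM rays(1)] tendsto_unique[OF trivial_limit_at_right_real] by blast
  \<comment> \<open>On the level \<open>0\<close> the mixed term drops out; on the level \<open>3/5\<close> only its sign is unknown,
    and squaring removes it.\<close>
  have "\<exists>\<^sub>F z in at p. M z \<bullet> m = 0 \<and> (M z \<bullet> n)\<^sup>2 = 1 - 0\<^sup>2"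
    by (rule level) simp_all
  then have "\<exists>\<^sub>F z in at p. Q (M z) = Q n"
  proof (rule frequently_elim1)
    fix z
    assume "M z \<bullet> m = 0 \<and> (M z \<bullet> n)\<^sup>2 = 1 - 0\<^sup>2"
    then show "Q (M z) = Q n"
      using expand[of "M z"] \<open>Q m = 0\<close> by simp
  qed
  then have "Q n = 0"
    using tendsto_frequently_eq_imp_eq[OF QM] by simp
  have "\<exists>\<^sub>F z in at p. M z \<bullet> m = 3 / 5 \<and> (M z \<bullet> n)\<^sup>2 = 1 - (3 / 5)\<^sup>2"
    by (rule level) simp_all
  then have "\<exists>\<^sub>F z in at p. (Q (M z))\<^sup>2 = (12 / 25 * K)\<^sup>2"
  proof (rule frequently_elim1)
    fix z
    assume z: "M z \<bullet> m = 3 / 5 \<and> (M z \<bullet> n)\<^sup>2 = 1 - (3 / 5)\<^sup>2"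
    have "Q (M z) = 3 / 5 * (M z \<bullet> n) * K"
      using expand[of "M z"] z \<open>Q m = 0\<close> \<open>Q n = 0\<close> by simp
    then have "(Q (M z))\<^sup>2 = (3 / 5)\<^sup>2 * (M z \<bullet> n)\<^sup>2 * K\<^sup>2"
      by (simp only: power_mult_distrib)
    also have "\<dots> = (3 / 5)\<^sup>2 * (1 - (3 / 5)\<^sup>2) * K\<^sup>2"
      using z by (simp only:)
    also have "\<dots> = (12 / 25 * K)\<^sup>2"
      by (simp add: power2_eq_square)
    finally show "(Q (M z))\<^sup>2 = (12 / 25 * K)\<^sup>2" .
  qed
  from tendsto_frequently_eq_imp_eq[OF tendsto_power[OF QM, of 2] this]
  have "K = 0"
    by simp
  show ?thesis
    using expand[of w] \<open>Q m = 0\<close> \<open>Q n = 0\<close> \<open>K = 0\<close> unfolding Q_def by simp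
qed

lemma quadratic_form_eq_0_near_isolated_zero:
  fixes V T :: "complex \<Rightarrow> complex"
  assumes V: "(V has_derivative L) (at p)" "V p = 0" "L v \<noteq> 0"
    and isolated: "continuous_on (ball p r - {p}) V" "r > 0" "\<And>z. z \<in> ball p r - {p} \<Longrightarrow> V z \<noteq> 0"
    and T: "bounded_linear T" "((\<lambda>z. sgn (V z) \<bullet> T (sgn (V z))) \<longlongrightarrow> 0) (at p)"
  shows "w \<bullet> T w = 0"
proof -
  have "linear L"
    using V(1) has_derivative_linear by blast
  then have "v \<noteq> 0" "L (- v) = - L v"
    using V(3) linear_0 linear_neg by metis+
  have "((\<lambda>t. sgn (V (p - t *\<^sub>R v))) \<longlongrightarrow> - sgn (L v)) (at_right 0)"
    using tendsto_sgn_along_ray[OF V(1,2), of "- v"] V(3) \<open>L (- v) = - L v\<close> by (simp add: sgn_minus)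
  moreover have "continuous_on (ball p r - {p}) (\<lambda>z. sgn (V z))"
    using isolated(1,3) by (intro continuous_on_sgn) auto
  moreover have "cmod (sgn (V z)) = 1" if "z \<in> ball p r - {p}" for z
    using isolated(3)[OF that] by (simp add: norm_sgn)
  ultimately show ?thesis
    using quadratic_form_eq_0_if_tendsto_0_along_unit_field[OF T(1) _ isolated(2) _ T(2) \<open>v \<noteq> 0\<close>
        _ tendsto_sgn_along_ray[OF V]] V(3)
    by (simp add: norm_sgn)
qed

lemma norm_bigo_if_has_derivative_zero:
  fixes F :: "'a::real_normed_vector \<Rightarrow> 'b::real_normed_vector"
  assumes "(F has_derivative L) (at p)" "F p = 0"
  shows "(\<lambda>z. norm (F z)) \<in> O[at p](\<lambda>z. norm (z - p))"
proof -
  obtain B where B: "\<And>h. norm (L h) \<le> norm h * B"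
    using assms(1) has_derivative_bounded_linear bounded_linear.bounded by blast
  obtain d where "d > 0"
    and d: "\<And>y. norm (y - p) < d \<Longrightarrow> norm (F y - F p - L (y - p)) \<le> 1 * norm (y - p)"
    using assms(1) zero_less_one unfolding has_derivative_at_alt by blast
  have "norm (F y) \<le> (B + 1) * norm (y - p)" if "norm (y - p) < d" for y
    using norm_triangle_ineq[of "F y - L (y - p)" "L (y - p)"] d[OF that] B[of "y - p"] assms(2)
    by (simp add: algebra_simps)
  then have "eventually (\<lambda>z. norm (norm (F z)) \<le> (B + 1) * norm (norm (z - p))) (at p)"
    unfolding eventually_at using \<open>d > 0\<close> by (auto simp: dist_norm)
  then show ?thesis
    by (rule bigoI)
qed

lemma tendsto_mult_norm_0_if_smallo_inverse_dist:
  fixes F :: "'a::real_normed_vector \<Rightarrow> 'b::real_normed_vector" and H :: "'a \<Rightarrow> real"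
  assumes "H \<in> o[at p](\<lambda>z. 1 / norm (z - p))" "(F has_derivative L) (at p)" "F p = 0"
  shows "((\<lambda>z. H z * norm (F z)) \<longlongrightarrow> 0) (at p)"
proof -
  have "(\<lambda>z. norm (F z) * H z) \<in> o[at p](\<lambda>z. norm (z - p) * (1 / norm (z - p)))"
    by (rule landau_o.big_small_mult[OF norm_bigo_if_has_derivative_zero[OF assms(2,3)] assms(1)])
  also have "eventually (\<lambda>z. norm (z - p) * (1 / norm (z - p)) = 1) (at p)"
    unfolding eventually_at by (auto intro: exI[of _ 1])
  then have "o[at p](\<lambda>z. norm (z - p) * (1 / norm (z - p))) = o[at p](\<lambda>_. 1)"
    by (rule landau_o.small.cong)
  finally show ?thesis
    using smalloD_tendsto by (fastforce simp: mult.commute)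
qed

lemma vf_index_eq_1_if_has_derivative_id:
  assumes "(V has_derivative id) (at p)" "V p = 0" "r > 0" "continuous_on (ball p r) V"
  shows "vf_index_eq V p 1"
proof -
  obtain d where "d > 0"
    and d: "\<And>y. norm (y - p) < d \<Longrightarrow> norm (V y - V p - id (y - p)) \<le> 1/2 * norm (y - p)"
    using assms(1) unfolding has_derivative_at_alt by (meson half_gt_zero zero_less_one)
  show ?thesis
    unfolding vf_index_eq_def
  proof (intro exI[of _ "min d r"] conjI allI impI)
    show "min d r > 0"
      using \<open>d > 0\<close> assms(3) by simp
    fix \<rho>
    assume \<rho>: "0 < \<rho> \<and> \<rho> < min d r"
    have sphere: "circlepath p \<rho> t \<in> sphere p \<rho>" if "t \<in> {0..1}" for t
      using path_image_circlepath[of p \<rho>] \<rho> that unfolding path_image_def by auto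
    have "path (V \<circ> circlepath p \<rho>)"
      unfolding path_def
    proof (rule continuous_on_compose)
      show "continuous_on {0..1} (circlepath p \<rho>)"
        using path_circlepath unfolding path_def .
      have "circlepath p \<rho> ` {0..1} \<subseteq> ball p r"
        using sphere \<rho> by force
      then show "continuous_on (circlepath p \<rho> ` {0..1}) V"
        using continuous_on_subset[OF assms(4)] by blast
    qed
    moreover have "norm ((V \<circ> circlepath p \<rho>) t - circlepath 0 \<rho> t) < norm (circlepath 0 \<rho> t - 0)"
      if "t \<in> {0..1}" for t
    proof -
      define q where "q = circlepath p \<rho> t"
      have "norm (q - p) = \<rho>"
        using sphere[OF that] \<rho> unfolding q_def by (simp add: dist_norm norm_minus_commute)
      moreover have "circlepath 0 \<rho> t = q - p"
        unfolding q_def circlepath_def part_circlepath_def by simp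
      moreover have "norm (V q - (q - p)) \<le> 1/2 * norm (q - p)"
        using d[of q] assms(2) \<open>norm (q - p) = \<rho>\<close> \<rho> by simp
      ultimately show ?thesis
        using \<rho> by (simp add: q_def)
    qed
    ultimately have "winding_number (V \<circ> circlepath p \<rho>) 0 = winding_number (circlepath 0 \<rho>) 0"
      using pathfinish_circlepath[of p \<rho>] pathstart_circlepath[of p \<rho>]
        pathfinish_circlepath[of 0 \<rho>] pathstart_circlepath[of 0 \<rho>]
      by (intro winding_number_nearby_loops_eq) (auto simp: pathfinish_def pathstart_def)
    also have "\<dots> = 1"
      using \<rho> by (simp add: winding_number_circlepath_centre)
    finally show "winding_number (V \<circ> circlepath p \<rho>) 0 = of_int 1"
      by simp
  qed
qed


section \<open>The field \<open>N\<^sup>\<bottom>D\<close>\<close>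

lemma has_derivative_Complex:
  fixes f g :: "'a::real_normed_vector \<Rightarrow> real"
  assumes "(f has_derivative f') F" "(g has_derivative g') F"
  shows "((\<lambda>x. Complex (f x) (g x)) has_derivative (\<lambda>h. Complex (f' h) (g' h))) F"
  using has_derivative_add[OF has_derivative_of_real[OF assms(1)]
      has_derivative_mult_right[OF has_derivative_of_real[OF assms(2)], of \<i>]]
  by (simp add: Complex_eq)

lemma has_derivative_divide_sqrt_sum_squares:
  fixes f g :: "'a::real_normed_vector \<Rightarrow> real"
  assumes f: "(f has_derivative f') (at p)" and g: "(g has_derivative g') (at p)"
    and nonzero: "f p \<noteq> 0 \<or> g p \<noteq> 0"
  shows "((\<lambda>z. f z / sqrt ((f z)\<^sup>2 + (g z)\<^sup>2)) has_derivative
          (\<lambda>h. g p * (g p * f' h - f p * g' h) / sqrt ((f p)\<^sup>2 + (g p)\<^sup>2) ^ 3)) (at p)"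
proof -
  define D where "D = sqrt ((f p)\<^sup>2 + (g p)\<^sup>2)"
  have pos: "0 < (f p)\<^sup>2 + (g p)\<^sup>2"
    using nonzero by (simp add: sum_power2_gt_zero_iff)
  then have "D > 0" "D\<^sup>2 = (f p)\<^sup>2 + (g p)\<^sup>2"
    unfolding D_def by simp_all
  have "((\<lambda>z. f z / sqrt ((f z)\<^sup>2 + (g z)\<^sup>2)) has_derivative
      (\<lambda>h. (f' h * D - f p * ((2 * f p * f' h + 2 * g p * g' h) * (inverse D / 2))) / (D * D))) (at p)"
    unfolding D_def using pos
    by (auto intro!: derivative_eq_intros f g simp: power2_eq_square)
  moreover have "(f' h * D - f p * ((2 * f p * f' h + 2 * g p * g' h) * (inverse D / 2))) / (D * D)
      = g p * (g p * f' h - f p * g' h) / D ^ 3" for h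
  proof -
    have "(f' h * D - f p * ((2 * f p * f' h + 2 * g p * g' h) * (inverse D / 2))) / (D * D)
        = (f' h * D\<^sup>2 - f p * (f p * f' h + g p * g' h)) / D ^ 3"
      using \<open>D > 0\<close> by (simp add: field_simps power2_eq_square power3_eq_cube)
    also have "\<dots> = g p * (g p * f' h - f p * g' h) / D ^ 3"
      unfolding \<open>D\<^sup>2 = (f p)\<^sup>2 + (g p)\<^sup>2\<close> by (simp add: algebra_simps power2_eq_square)
    finally show ?thesis .
  qed
  ultimately show ?thesis
    unfolding D_def by simp
qed

lemma has_derivative_px_py:
  fixes f :: "complex \<Rightarrow> real"
  assumes "f differentiable (at z)"
  shows "(f has_derivative (\<lambda>h. Re h * px f z + Im h * py f z)) (at z)"
proof -
  have f': "(f has_derivative frechet_derivative f (at z)) (at z)"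
    using assms frechet_derivative_works by blast
  have "frechet_derivative f (at z) h = Re h * px f z + Im h * py f z" for h
  proof -
    have "h = Re h *\<^sub>R 1 + Im h *\<^sub>R \<i>"
      by (simp add: complex_eq_iff)
    then have "frechet_derivative f (at z) h = frechet_derivative f (at z) (Re h *\<^sub>R 1 + Im h *\<^sub>R \<i>)"
      by simp
    then show ?thesis
      using has_derivative_linear[OF f'] unfolding px_def py_def
      by (simp add: linear_add linear_scale)
  qed
  then have "frechet_derivative f (at z) = (\<lambda>h. Re h * px f z + Im h * py f z)"
    by (rule ext)
  then show ?thesis
    using f' by simp
qed

lemma py_px_eq_px_py:
  fixes u :: "complex \<Rightarrow> real"
  assumes "open S" "p \<in> S" "\<And>z. z \<in> S \<Longrightarrow> u differentiable (at z)"
    and "px u differentiable (at p)" "py u differentiable (at p)"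
  shows "py (px u) p = px (py u) p"
  using frechet_derivative_partials_commute[OF assms(1-3), of 1 \<i>] assms(4,5)
  unfolding px_def[abs_def] py_def[abs_def] by simp

definition grad :: "(complex \<Rightarrow> real) \<Rightarrow> complex \<Rightarrow> complex" where
  "grad u z = Complex (px u z) (py u z)"

definition hessian :: "(complex \<Rightarrow> real) \<Rightarrow> complex \<Rightarrow> complex \<Rightarrow> complex" where
  "hessian u p h = Complex (Re h * px (px u) p + Im h * py (px u) p)
                           (Re h * px (py u) p + Im h * py (py u) p)"

lemma has_derivative_grad:
  assumes "px u differentiable (at p)" "py u differentiable (at p)"
  shows "(grad u has_derivative hessian u p) (at p)"
  using has_derivative_Complex[OF has_derivative_px_py[OF assms(1)] has_derivative_px_py[OF assms(2)]]
  unfolding grad_def[abs_def] hessian_def[abs_def] .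

lemma NperpD_eq: "NperpD u = (\<lambda>z. z - \<i> * grad u z)"
  by (simp add: fun_eq_iff NperpD_def grad_def complex_eq_iff)

lemma has_derivative_NperpD:
  assumes "px u differentiable (at p)" "py u differentiable (at p)"
  shows "(NperpD u has_derivative (\<lambda>h. h - \<i> * hessian u p h)) (at p)"
  unfolding NperpD_eq
  by (intro has_derivative_diff has_derivative_ident has_derivative_mult_right has_derivative_grad[OF assms])

lemma continuous_on_NperpD:
  assumes "C2_on \<Omega> u"
  shows "continuous_on \<Omega> (NperpD u)"
proof (intro continuous_at_imp_continuous_on ballI)
  fix z
  assume "z \<in> \<Omega>"
  then have "px u differentiable (at z)" "py u differentiable (at z)"
    using assms unfolding C2_on_def by blast+
  then show "isCont (NperpD u) z"
    using has_derivative_NperpD has_derivative_continuous by blast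
qed

lemma Dfun_eq_norm_NperpD: "Dfun u z = cmod (NperpD u z)"
  by (simp add: Dfun_def NperpD_def cmod_def power2_eq_square algebra_simps)

lemma Sset_eq: "Sset \<Omega> u = {z \<in> \<Omega>. NperpD u z = 0}"
  by (auto simp: Sset_def NperpD_def Complex_eq_0)

lemma NperpD_isolated_zero:
  assumes "open \<Omega>" "p0 \<in> Sset \<Omega> u" "\<exists>\<epsilon>>0. ball p0 \<epsilon> \<inter> Sset \<Omega> u = {p0}"
  obtains r where "r > 0" "ball p0 r \<subseteq> \<Omega>" "\<And>z. z \<in> ball p0 r - {p0} \<Longrightarrow> NperpD u z \<noteq> 0"
proof -
  obtain \<epsilon> where "\<epsilon> > 0" and \<epsilon>: "ball p0 \<epsilon> \<inter> Sset \<Omega> u = {p0}"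
    using assms(3) by blast
  have "p0 \<in> \<Omega> \<inter> ball p0 \<epsilon>"
    using assms(2) \<open>\<epsilon> > 0\<close> by (simp add: Sset_def)
  then obtain r where "r > 0" "ball p0 r \<subseteq> \<Omega> \<inter> ball p0 \<epsilon>"
    using openE[OF open_Int[OF assms(1) open_ball]] by blast
  moreover have "NperpD u z \<noteq> 0" if "z \<in> ball p0 r - {p0}" for z
  proof
    assume "NperpD u z = 0"
    with that \<open>ball p0 r \<subseteq> \<Omega> \<inter> ball p0 \<epsilon>\<close> have "z \<in> ball p0 \<epsilon> \<inter> Sset \<Omega> u"
      by (auto simp: Sset_eq)
    with that \<epsilon> show False
      by blast
  qed
  ultimately show thesis
    using that by blast
qed

lemma Hfun_mult_Dfun:
  assumes "px u differentiable (at p)" "py u differentiable (at p)" "NperpD u p \<noteq> 0"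
  shows "Hfun u p * Dfun u p = sgn (NperpD u p) \<bullet> hessian u p (sgn (NperpD u p))"
proof -
  define f where "f z = px u z - Im z" for z
  define g where "g z = py u z + Re z" for z
  define D where "D = sqrt ((f p)\<^sup>2 + (g p)\<^sup>2)"
  define f' where "f' h = Re h * px (px u) p + Im h * py (px u) p - Im h" for h
  define g' where "g' h = Re h * px (py u) p + Im h * py (py u) p + Re h" for h
  have "(f has_derivative f') (at p)"
    unfolding f_def[abs_def] f'_def[abs_def]
    using has_derivative_px_py[OF assms(1)] by (auto intro!: derivative_eq_intros)
  moreover have "(g has_derivative g') (at p)"
    unfolding g_def[abs_def] g'_def[abs_def]
    using has_derivative_px_py[OF assms(2)] by (auto intro!: derivative_eq_intros)
  moreover have nonzero: "f p \<noteq> 0 \<or> g p \<noteq> 0"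
    using assms(3) by (auto simp: NperpD_def f_def g_def Complex_eq_0)
  ultimately have div_derivs: "((\<lambda>z. f z / sqrt ((f z)\<^sup>2 + (g z)\<^sup>2)) has_derivative
        (\<lambda>h. g p * (g p * f' h - f p * g' h) / D ^ 3)) (at p)"
      "((\<lambda>z. g z / sqrt ((f z)\<^sup>2 + (g z)\<^sup>2)) has_derivative
        (\<lambda>h. f p * (f p * g' h - g p * f' h) / D ^ 3)) (at p)"
    using has_derivative_divide_sqrt_sum_squares[of f f' p g g']
      has_derivative_divide_sqrt_sum_squares[of g g' p f f']
    by (auto simp: D_def add.commute)
  have "Hfun u p = px (\<lambda>z. f z / sqrt ((f z)\<^sup>2 + (g z)\<^sup>2)) p
      + py (\<lambda>z. g z / sqrt ((f z)\<^sup>2 + (g z)\<^sup>2)) p"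
    by (simp add: Hfun_def Dfun_def f_def g_def)
  also have "\<dots> = (g p * (g p * f' 1 - f p * g' 1) + f p * (f p * g' \<i> - g p * f' \<i>)) / D ^ 3"
    unfolding px_def py_def frechet_derivative_at[OF div_derivs(1), symmetric]
      frechet_derivative_at[OF div_derivs(2), symmetric]
    by (simp add: add_divide_distrib)
  finally have H: "Hfun u p = (g p * (g p * f' 1 - f p * g' 1) + f p * (f p * g' \<i> - g p * f' \<i>)) / D ^ 3" .
  have "D > 0"
    using nonzero by (simp add: D_def sum_power2_gt_zero_iff)
  have "Dfun u p = D"
    by (simp add: Dfun_def D_def f_def g_def)
  then have "cmod (NperpD u p) = D"
    by (simp add: Dfun_eq_norm_NperpD)
  then have sgn: "sgn (NperpD u p) = Complex (g p / D) (- f p / D)"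
    by (simp add: complex_eq_iff NperpD_def f_def g_def)
  show ?thesis
    unfolding H \<open>Dfun u p = D\<close> sgn using \<open>D > 0\<close>
    by (simp add: inner_complex_def hessian_def f'_def g'_def field_simps power2_eq_square power3_eq_cube)
qed

lemma abs_bilinear_le_sum_abs_coeffs:
  fixes x y a b c d :: real
  assumes "\<bar>x\<bar> \<le> 1" "\<bar>y\<bar> \<le> 1"
  shows "\<bar>x * (a * x + b * y) + y * (c * x + d * y)\<bar> \<le> \<bar>a\<bar> + \<bar>b\<bar> + \<bar>c\<bar> + \<bar>d\<bar>"
proof -
  have "\<bar>x * x\<bar> \<le> 1" "\<bar>x * y\<bar> \<le> 1" "\<bar>y * x\<bar> \<le> 1" "\<bar>y * y\<bar> \<le> 1"
    unfolding abs_mult using assms by (meson abs_ge_zero mult_le_one)+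
  then have "\<bar>a * (x * x)\<bar> \<le> \<bar>a\<bar>" "\<bar>b * (x * y)\<bar> \<le> \<bar>b\<bar>"
    "\<bar>c * (y * x)\<bar> \<le> \<bar>c\<bar>" "\<bar>d * (y * y)\<bar> \<le> \<bar>d\<bar>"
    by (simp_all add: abs_mult mult_left_le)
  then show ?thesis
    by (simp add: algebra_simps) linarith
qed

lemma tendsto_inner_hessian_diff:
  assumes "open \<Omega>" "C2_on \<Omega> u" "p \<in> \<Omega>" "eventually (\<lambda>z. norm (M z) \<le> 1) (at p)"
  shows "((\<lambda>z. M z \<bullet> hessian u z (M z) - M z \<bullet> hessian u p (M z)) \<longlongrightarrow> 0) (at p)"
proof (rule tendsto_0_le)
  define E where "E z = \<bar>px (px u) z - px (px u) p\<bar> + \<bar>py (px u) z - py (px u) p\<bar>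
      + \<bar>px (py u) z - px (py u) p\<bar> + \<bar>py (py u) z - py (py u) p\<bar>" for z
  have "isCont (px (px u)) p" "isCont (py (px u)) p" "isCont (px (py u)) p" "isCont (py (py u)) p"
    using assms(2,3) continuous_on_eq_continuous_at[OF assms(1)] unfolding C2_on_def by blast+
  then have "(E \<longlongrightarrow> E p) (at p)"
    unfolding E_def isCont_def by (intro tendsto_intros)
  then show "(E \<longlongrightarrow> 0) (at p)"
    by (simp add: E_def)
  show "eventually (\<lambda>z. norm (M z \<bullet> hessian u z (M z) - M z \<bullet> hessian u p (M z)) \<le> norm (E z) * 1) (at p)"
    using assms(4)
  proof eventually_elim
    case (elim z)
    then have "\<bar>Re (M z)\<bar> \<le> 1" "\<bar>Im (M z)\<bar> \<le> 1"
      using abs_Re_le_cmod abs_Im_le_cmod order_trans by blast+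
    moreover have "M z \<bullet> hessian u z (M z) - M z \<bullet> hessian u p (M z) =
        Re (M z) * ((px (px u) z - px (px u) p) * Re (M z) + (py (px u) z - py (px u) p) * Im (M z))
        + Im (M z) * ((px (py u) z - px (py u) p) * Re (M z) + (py (py u) z - py (py u) p) * Im (M z))"
      by (simp add: inner_complex_def hessian_def algebra_simps)
    ultimately show ?case
      using abs_bilinear_le_sum_abs_coeffs by (simp add: E_def)
  qed
qed

lemma inner_hessian_sgn_NperpD_tendsto_0:
  assumes "open \<Omega>" "C2_on \<Omega> u" "p \<in> \<Omega>" "NperpD u p = 0"
    and "r > 0" "ball p r \<subseteq> \<Omega>" "\<And>z. z \<in> ball p r - {p} \<Longrightarrow> NperpD u z \<noteq> 0"
    and "Hfun u \<in> o[at p](\<lambda>z. 1 / cmod (z - p))"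
  shows "((\<lambda>z. sgn (NperpD u z) \<bullet> hessian u p (sgn (NperpD u z))) \<longlongrightarrow> 0) (at p)"
proof -
  let ?M = "\<lambda>z. sgn (NperpD u z)"
  have dx: "px u differentiable (at z)" and dy: "py u differentiable (at z)" if "z \<in> \<Omega>" for z
    using assms(2) that unfolding C2_on_def by blast+
  have "((\<lambda>z. Hfun u z * Dfun u z) \<longlongrightarrow> 0) (at p)"
    using tendsto_mult_norm_0_if_smallo_inverse_dist[OF assms(8)
        has_derivative_NperpD[OF dx[OF assms(3)] dy[OF assms(3)]] assms(4)]
    by (simp add: Dfun_eq_norm_NperpD)
  moreover have "eventually (\<lambda>z. z \<in> ball p r - {p}) (at p)"
    unfolding eventually_at using assms(5) by (auto simp: dist_commute)
  then have "eventually (\<lambda>z. Hfun u z * Dfun u z = ?M z \<bullet> hessian u z (?M z)) (at p)"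
  proof eventually_elim
    case (elim z)
    then have "z \<in> \<Omega>"
      using assms(6) by blast
    then show ?case
      using Hfun_mult_Dfun[OF dx dy assms(7)] elim by blast
  qed
  ultimately have "((\<lambda>z. ?M z \<bullet> hessian u z (?M z)) \<longlongrightarrow> 0) (at p)"
    by (rule Lim_transform_eventually)
  moreover have "((\<lambda>z. ?M z \<bullet> hessian u z (?M z) - ?M z \<bullet> hessian u p (?M z)) \<longlongrightarrow> 0) (at p)"
    by (rule tendsto_inner_hessian_diff[OF assms(1-3)]) (simp add: norm_sgn)
  ultimately show ?thesis
    using tendsto_diff by fastforce
qed

lemma NperpD_derivative_nonzero:
  assumes "py (px u) p = px (py u) p"
  obtains v where "v - \<i> * hessian u p v \<noteq> 0"
  using assms that[of 1] that[of \<i>] by (force simp: hessian_def complex_eq_iff)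

lemma second_partials_eq_0_if_hessian_form_eq_0:
  assumes "py (px u) p = px (py u) p" "\<And>w. w \<bullet> hessian u p w = 0"
  shows "px (px u) p = 0" "py (px u) p = 0" "px (py u) p = 0" "py (py u) p = 0"
  using assms(1) assms(2)[of 1] assms(2)[of \<i>] assms(2)[of "1 + \<i>"]
  by (simp_all add: hessian_def inner_complex_def)

lemma hessian_form_eq_0_at_isolated_zero:
  assumes "open \<Omega>" "C2_on \<Omega> u" "p \<in> \<Omega>" "NperpD u p = 0"
    and "r > 0" "ball p r \<subseteq> \<Omega>" "\<And>z. z \<in> ball p r - {p} \<Longrightarrow> NperpD u z \<noteq> 0"
    and "Hfun u \<in> o[at p](\<lambda>z. 1 / cmod (z - p))"
  shows "w \<bullet> hessian u p w = 0"
proof -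
  have du: "\<And>z. z \<in> \<Omega> \<Longrightarrow> u differentiable (at z)"
    and dx: "px u differentiable (at p)" and dy: "py u differentiable (at p)"
    using assms(2,3) unfolding C2_on_def by blast+
  obtain v where "v - \<i> * hessian u p v \<noteq> 0"
    using NperpD_derivative_nonzero[OF py_px_eq_px_py[OF assms(1,3) du dx dy]] .
  moreover have "continuous_on (ball p r - {p}) (NperpD u)"
    using continuous_on_NperpD[OF assms(2)] assms(6) continuous_on_subset by blast
  ultimately show ?thesis
    using quadratic_form_eq_0_near_isolated_zero[OF has_derivative_NperpD[OF dx dy] assms(4) _ _ assms(5,7)
        has_derivative_bounded_linear[OF has_derivative_grad[OF dx dy]]
        inner_hessian_sgn_NperpD_tendsto_0[OF assms]]
    by blast
qed

theorem lemma3p8: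
  fixes \<Omega> :: "complex set" and u :: "complex \<Rightarrow> real" and p0 :: complex
  assumes "open \<Omega>" and "connected \<Omega>"
    and "C2_on \<Omega> u"
    and "p0 \<in> Sset \<Omega> u"
    and "\<exists>\<epsilon>>0. ball p0 \<epsilon> \<inter> Sset \<Omega> u = {p0}"
    and "Hfun u \<in> o[at p0](\<lambda>p. 1 / cmod (p - p0))"
  shows "(NperpD u has_derivative id) (at p0)
    \<and> vf_index_eq (NperpD u) p0 1
    \<and> px (px u) p0 = 0 \<and> py (px u) p0 = 0 \<and> py (py u) p0 = 0"
proof -
  have "p0 \<in> \<Omega>" "NperpD u p0 = 0"
    using assms(4) by (simp_all add: Sset_eq)
  obtain r where r: "r > 0" "ball p0 r \<subseteq> \<Omega>"
    and isolated: "\<And>z. z \<in> ball p0 r - {p0} \<Longrightarrow> NperpD u z \<noteq> 0"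
    using NperpD_isolated_zero[OF assms(1,4,5)] by blast
  have du: "\<And>z. z \<in> \<Omega> \<Longrightarrow> u differentiable (at z)"
    and dx: "px u differentiable (at p0)" and dy: "py u differentiable (at p0)"
    using assms(3) \<open>p0 \<in> \<Omega>\<close> unfolding C2_on_def by blast+
  have "w \<bullet> hessian u p0 w = 0" for w
    using hessian_form_eq_0_at_isolated_zero[OF assms(1,3) \<open>p0 \<in> \<Omega>\<close> \<open>NperpD u p0 = 0\<close> r isolated
        assms(6)] .
  note second_partials =
    second_partials_eq_0_if_hessian_form_eq_0[OF py_px_eq_px_py[OF assms(1) \<open>p0 \<in> \<Omega>\<close> du dx dy] this]
  then have "hessian u p0 = (\<lambda>_. 0)"
    by (simp add: fun_eq_iff hessian_def complex_eq_iff)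
  then have "(NperpD u has_derivative id) (at p0)"
    using has_derivative_NperpD[OF dx dy] by (simp add: id_def)
  moreover have "vf_index_eq (NperpD u) p0 1"
    using vf_index_eq_1_if_has_derivative_id[OF calculation \<open>NperpD u p0 = 0\<close> r(1)]
      continuous_on_subset[OF continuous_on_NperpD[OF assms(3)] r(2)] .
  ultimately show ?thesis
    using second_partials by blast
qed

end
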